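(* Assume that for every $x\in V$ the functions $s\mapsto H(x,s)$ and $s\mapsto f_l(x,s)$ ($l=1,\dots,m$) are nondecreasing. If $(u^1,\dots,u^m)$ solves the discrete system (S), then $u^i(x)\,u^j(x)=0$ for all $x\in V$ and all $i\neq j$.
   Context: Let $G=(V,E)$ be a finite, connected, undirected graph with at least two vertices. For $x,y\in V$, $d(x,y)$ denotes the graph (shortest-path) distance, and $\deg(x)=|\{y\in V:(x,y)\in E\}|$. The boundary of $G$ is $$\partial G=\Big\{x\in V:\ \exists\, y\in V \text{ with } \tfrac{1}{\deg(x)}\textstyle\sum_{(x,z)\in E} d(z,y)<d(x,y)\Big\},$$ and the interior is $G^o=V\setminus\partial G$. For $r:V\to\mathbb{R}$, the mean value at $x$ is $\overline{r}(x)=\frac{1}{\deg(x)}\sum_{(x,y)\in E} r(y)$. Fix an integer $m\ge1$. Let $H:V\times[0,\infty)\to\mathbb{R}$ and $f_l:V\times[0,\infty)\to\mathbb{R}$ ($l=1,\dots,m$) be continuous in the second variable with $H(x,0)=0$ and $f_l(x,0)=0$ for all $x\in V$; they are extended to negative arguments by $H(x,s)=-H(x,-s)$ and $f_l(x,s)=-f_l(x,-s)$ for $s<0$. Let $\phi^l:\partial G\to[0,\infty)$ ($l=1,\dots,m$) be boundary data satisfying $\phi^i(x)\phi^j(x)=0$ for all $x\in\partial G$ and $i\neq j$. The discrete system (S) for $(u^1,\dots,u^m)$, $u^l:V\to\mathbb{R}$, is: for every $l=1,\dots,m$, $$u^l(x)=\max\Big(H\Big(x,\ \overline{u}^l(x)-\sum_{p\neq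 l}\overline{u}^p(x)\Big)-f_l\big(x,u^l(x)\big),\ 0\Big)\quad (x\in G^o),\qquad u^l(x)=\phi^l(x)\quad (x\in\partial G).$$ *)

theory Defs
  imports "HOL-Analysis.Analysis"
begin

definition graph_edges :: "('v \<Rightarrow> 'v \<Rightarrow> bool) \<Rightarrow> ('v \<times> 'v) set" where
  "graph_edges E = {(x, y). E x y}"

definition fin_conn_graph :: "'v set \<Rightarrow> ('v \<Rightarrow> 'v \<Rightarrow> bool) \<Rightarrow> bool" where
  "fin_conn_graph V E \<longleftrightarrow>
     finite V \<and> 2 \<le> card V
     \<and> (\<forall>x y. E x y \<longrightarrow> x \<in> V \<and> y \<in> V)
     \<and> (\<forall>x y. E x y \<longrightarrow> E y x)
     \<and> (\<forall>x. \<not> E x x)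
     \<and> (\<forall>x\<in>V. \<forall>y\<in>V. \<exists>n. (x, y) \<in> graph_edges E ^^ n)"

definition gdist :: "('v \<Rightarrow> 'v \<Rightarrow> bool) \<Rightarrow> 'v \<Rightarrow> 'v \<Rightarrow> nat" where
  "gdist E x y = (LEAST n. (x, y) \<in> graph_edges E ^^ n)"

definition gdeg :: "'v set \<Rightarrow> ('v \<Rightarrow> 'v \<Rightarrow> bool) \<Rightarrow> 'v \<Rightarrow> nat" where
  "gdeg V E x = card {y \<in> V. E x y}"

definition gmean :: "'v set \<Rightarrow> ('v \<Rightarrow> 'v \<Rightarrow> bool) \<Rightarrow> ('v \<Rightarrow> real) \<Rightarrow> 'v \<Rightarrow> real" where
  "gmean V E r x = (\<Sum>y\<in>{y \<in> V. E x y}. r y) / real (gdeg V E x)"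

definition gboundary :: "'v set \<Rightarrow> ('v \<Rightarrow> 'v \<Rightarrow> bool) \<Rightarrow> 'v set" where
  "gboundary V E = {x \<in> V. \<exists>y\<in>V.
      gmean V E (\<lambda>z. real (gdist E z y)) x < real (gdist E x y)}"

definition ginterior :: "'v set \<Rightarrow> ('v \<Rightarrow> 'v \<Rightarrow> bool) \<Rightarrow> 'v set" where
  "ginterior V E = V - gboundary V E"

definition odd_ext_fun :: "(real \<Rightarrow> real) \<Rightarrow> bool" where
  "odd_ext_fun h \<longleftrightarrow> continuous_on {0..} h \<and> h 0 = 0 \<and> (\<forall>s<0. h s = - h (- s))"

definition solves_S ::
  "'v set \<Rightarrow> ('v \<Rightarrow> 'v \<Rightarrow> bool) \<Rightarrow> nat \<Rightarrow> ('v \<Rightarrow> real \<Rightarrow> real)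
   \<Rightarrow> (nat \<Rightarrow> 'v \<Rightarrow> real \<Rightarrow> real) \<Rightarrow> (nat \<Rightarrow> 'v \<Rightarrow> real) \<Rightarrow> (nat \<Rightarrow> 'v \<Rightarrow> real) \<Rightarrow> bool" where
  "solves_S V E m H f \<phi> u \<longleftrightarrow>
     (\<forall>l\<in>{1..m}.
        (\<forall>x\<in>ginterior V E.
           u l x = max (H x (gmean V E (u l) x - (\<Sum>p\<in>{1..m} - {l}. gmean V E (u p) x))
                        - f l x (u l x)) 0)
      \<and> (\<forall>x\<in>gboundary V E. u l x = \<phi> l x))"

end

theory Submission
  imports Defs
begin

text \<open>Every component of a solution is nonnegative. At an interior vertex where \<open>u\<^sup>l > 0\<close>,
  the equation forces \<open>H(x, a\<^sub>l) > 0\<close> for the argument \<open>a\<^sub>l\<close> of \<open>H\<close>, because \<open>f\<^sub>l \<ge> 0\<close>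
  on \<open>[0,\<infinity>)\<close>; as \<open>H(x,\<cdot>)\<close> is odd and nondecreasing, \<open>a\<^sub>l > 0\<close>, i.e. the mean of \<open>u\<^sup>l\<close>
  exceeds the sum of the means of the other components. Two components cannot both do this,
  since each of these sums contains the other's mean. On the boundary the claim is the
  disjointness of the data \<open>\<phi>\<close>.\<close>

lemma dominant_term_unique:
  fixes M :: "'i \<Rightarrow> 'a::linordered_semidom"
  assumes "finite I" "i \<in> I" "j \<in> I" "i \<noteq> j" "\<And>p. p \<in> I \<Longrightarrow> 0 \<le> M p"
    and "(\<Sum>p\<in>I - {i}. M p) < M i"
  shows "M j \<le> (\<Sum>p\<in>I - {j}. M p)"
proof -
  have "M j \<le> (\<Sum>p\<in>I - {i}. M p)"
    using assms by (intro member_le_sum) auto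
  also have "\<dots> < M i" by fact
  also have "M i \<le> (\<Sum>p\<in>I - {j}. M p)"
    using assms by (intro member_le_sum) auto
  finally show ?thesis by simp
qed

lemma odd_ext_fun_pos_imp_pos:
  assumes odd: "odd_ext_fun h" and mono: "mono_on {0..} h" and pos: "0 < h s"
  shows "0 < s"
proof (rule ccontr)
  assume "\<not> 0 < s"
  then consider "s = 0" | "s < 0" by linarith
  then show False
  proof cases
    case 1
    then show False using odd pos by (simp add: odd_ext_fun_def)
  next
    case 2
    then have "h s = - h (- s)" and "h 0 = 0" using odd by (auto simp: odd_ext_fun_def)
    moreover have "h 0 \<le> h (- s)" using mono 2 by (auto intro: mono_onD)
    ultimately show False using pos by simp
  qed
qed

lemma odd_ext_fun_nonneg:
  assumes "odd_ext_fun h" "mono_on {0..} h" "0 \<le> s"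
  shows "0 \<le> h s"
  using assms mono_onD[of "{0..}" h 0 s] by (auto simp: odd_ext_fun_def)

lemma gmean_nonneg:
  assumes "\<And>y. y \<in> V \<Longrightarrow> E x y \<Longrightarrow> 0 \<le> r y"
  shows "0 \<le> gmean V E r x"
  unfolding gmean_def using assms by (auto intro!: divide_nonneg_nonneg sum_nonneg)

lemma solves_S_interior:
  assumes "solves_S V E m H f \<phi> u" "l \<in> {1..m}" "x \<in> ginterior V E"
  shows "u l x = max (H x (gmean V E (u l) x - (\<Sum>p\<in>{1..m} - {l}. gmean V E (u p) x))
                      - f l x (u l x)) 0"
  using assms unfolding solves_S_def by blast

lemma solves_S_boundary:
  assumes "solves_S V E m H f \<phi> u" "l \<in> {1..m}" "x \<in> gboundary V E"
  shows "u l x = \<phi> l x"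
  using assms unfolding solves_S_def by blast

lemma solves_S_nonneg:
  assumes "solves_S V E m H f \<phi> u" "l \<in> {1..m}" "x \<in> V"
    and "\<And>l x. l \<in> {1..m} \<Longrightarrow> x \<in> gboundary V E \<Longrightarrow> 0 \<le> \<phi> l x"
  shows "0 \<le> u l x"
proof (cases "x \<in> gboundary V E")
  case True
  then show ?thesis using assms solves_S_boundary by metis
next
  case False
  then have "x \<in> ginterior V E" using assms(3) by (simp add: ginterior_def)
  then show ?thesis using solves_S_interior[OF assms(1,2)] by (metis max.cobounded2)
qed

lemma solves_S_pos_imp_dominant:
  assumes sol: "solves_S V E m H f \<phi> u" and l: "l \<in> {1..m}" and x: "x \<in> ginterior V E"
    and H: "odd_ext_fun (H x)" "mono_on {0..} (H x)"
    and f: "odd_ext_fun (f l x)" "mono_on {0..} (f l x)"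
    and pos: "0 < u l x"
  shows "(\<Sum>p\<in>{1..m} - {l}. gmean V E (u p) x) < gmean V E (u l) x"
proof -
  let ?a = "gmean V E (u l) x - (\<Sum>p\<in>{1..m} - {l}. gmean V E (u p) x)"
  have "0 \<le> f l x (u l x)"
    using odd_ext_fun_nonneg[OF f] pos by simp
  moreover have "u l x = max (H x ?a - f l x (u l x)) 0"
    using solves_S_interior[OF sol l x] .
  ultimately have "0 < H x ?a"
    using pos by linarith
  then have "0 < ?a"
    using odd_ext_fun_pos_imp_pos[OF H] by blast
  then show ?thesis by simp
qed

theorem lemma1:
  fixes V :: "'v set" and E :: "'v \<Rightarrow> 'v \<Rightarrow> bool" and m :: nat
    and H :: "'v \<Rightarrow> real \<Rightarrow> real" and f :: "nat \<Rightarrow> 'v \<Rightarrow> real \<Rightarrow> real"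
    and \<phi> :: "nat \<Rightarrow> 'v \<Rightarrow> real" and u :: "nat \<Rightarrow> 'v \<Rightarrow> real"
  assumes G: "fin_conn_graph V E"
    and m: "1 \<le> m"
    and H: "\<And>x. x \<in> V \<Longrightarrow> odd_ext_fun (H x)"
    and f: "\<And>l x. l \<in> {1..m} \<Longrightarrow> x \<in> V \<Longrightarrow> odd_ext_fun (f l x)"
    and Hmono: "\<And>x. x \<in> V \<Longrightarrow> mono_on {0..} (H x)"
    and fmono: "\<And>l x. l \<in> {1..m} \<Longrightarrow> x \<in> V \<Longrightarrow> mono_on {0..} (f l x)"
    and phi_nonneg: "\<And>l x. l \<in> {1..m} \<Longrightarrow> x \<in> gboundary V E \<Longrightarrow> 0 \<le> \<phi> l x"
    and phi_disj: "\<And>i j x. i \<in> {1..m} \<Longrightarrow> j \<in> {1..m} \<Longrightarrow> i \<noteq> j \<Longrightarrow>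
                     x \<in> gboundary V E \<Longrightarrow> \<phi> i x * \<phi> j x = 0"
    and sol: "solves_S V E m H f \<phi> u"
  shows "\<forall>x\<in>V. \<forall>i\<in>{1..m}. \<forall>j\<in>{1..m}. i \<noteq> j \<longrightarrow> u i x * u j x = 0"
proof (intro ballI impI)
  fix x i j assume x: "x \<in> V" and i: "i \<in> {1..m}" and j: "j \<in> {1..m}" and "i \<noteq> j"
  have nonneg: "0 \<le> u l y" if "l \<in> {1..m}" "y \<in> V" for l y
    using solves_S_nonneg[OF sol that phi_nonneg] .
  show "u i x * u j x = 0"
  proof (cases "x \<in> gboundary V E")
    case True
    then show ?thesis
      using phi_disj[OF i j \<open>i \<noteq> j\<close>] solves_S_boundary[OF sol] i j by simp
  next
    case False
    then have xi: "x \<in> ginterior V E" using x by (simp add: ginterior_def)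
    have dominant: "(\<Sum>p\<in>{1..m} - {l}. gmean V E (u p) x) < gmean V E (u l) x"
      if "l \<in> {1..m}" "0 < u l x" for l
      using solves_S_pos_imp_dominant[OF sol that(1) xi H[OF x] Hmono[OF x]
          f[OF that(1) x] fmono[OF that(1) x] that(2)] .
    show ?thesis
    proof (rule ccontr)
      assume "u i x * u j x \<noteq> 0"
      then have "0 < u i x" "0 < u j x" using nonneg i j x by (auto simp: less_le)
      then have "(\<Sum>p\<in>{1..m} - {i}. gmean V E (u p) x) < gmean V E (u i) x"
        and "(\<Sum>p\<in>{1..m} - {j}. gmean V E (u p) x) < gmean V E (u j) x"
        using dominant i j by auto
      moreover have "0 \<le> gmean V E (u p) x" if "p \<in> {1..m}" for p
        using that nonneg by (blast intro: gmean_nonneg)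
      ultimately have "gmean V E (u j) x \<le> (\<Sum>p\<in>{1..m} - {j}. gmean V E (u p) x)"
        using dominant_term_unique[of "{1..m}" i j "\<lambda>p. gmean V E (u p) x"] i j \<open>i \<noteq> j\<close>
        by blast
      then show False
        using \<open>(\<Sum>p\<in>{1..m} - {j}. gmean V E (u p) x) < gmean V E (u j) x\<close> by linarith
    qed
  qed
qed

end
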